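(* Let $U_1,U_2,\dots$ be i.i.d. almost surely positive random variables distributed as $U$ with tail function $Q(x)=\mathbb{P}(U>x)$, and assume $\mathbb{E}[U^2]<\infty$ and that there exist $\beta\in(0,1/2)$ and $x_0>0$ in the interior of the support of $U$ such that $Q^{1/2-\beta}$ is convex on $[x_0,\infty)$. Let $V_1\le\dots\le V_N$ be the order statistics of $(U_1,\dots,U_N)$, and define \[E_N(V)=\frac1N\sum_{i=1}^{N-1}\frac{V_iV_{N-1}}{V_{N-1}+V_i},\qquad C_N=\Big\{\tfrac14\mathbb{E}[U]\le E_N(V)\le 2\mathbb{E}[U]\Big\}.\] Then $\lim_{N\to\infty}\mathbb{P}(C_N)=1$. *)

theory Defs
  imports "HOL-Probability.Probability"
begin

definition measure_support :: "real measure \<Rightarrow> real set" where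
  "measure_support \<mu> = {x. \<forall>e>0. emeasure \<mu> (ball x e) > 0}"

text \<open>Order statistics V_1 \<le> ... \<le> V_N of (U_1,...,U_N), 1-indexed;
  the sample U_1,...,U_N is represented by U 0, ..., U (N-1).\<close>
definition order_stat :: "(nat \<Rightarrow> 'a \<Rightarrow> real) \<Rightarrow> nat \<Rightarrow> 'a \<Rightarrow> nat \<Rightarrow> real" where
  "order_stat U N \<omega> i = sort (map (\<lambda>j. U j \<omega>) [0..<N]) ! (i - 1)"

definition E_N :: "(nat \<Rightarrow> 'a \<Rightarrow> real) \<Rightarrow> nat \<Rightarrow> 'a \<Rightarrow> real" where
  "E_N U N \<omega> = (1 / real N) *
     (\<Sum>i=1..N-1. order_stat U N \<omega> i * order_stat U N \<omega> (N-1)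
                   / (order_stat U N \<omega> (N-1) + order_stat U N \<omega> i))"

end

theory Submission imports Defs begin

(* Every summand V_i V_(N-1) / (V_(N-1) + V_i) of N E_N(V) lies between V_i / 2 and V_i, so
   N E_N(V) is within a factor 2 of S_N - V_N, the sample sum minus the sample maximum.
   With mu = E[U], Chebyshev's inequality (and Bienayme's formula for the variance of S_N) bounds
   the probability of |S_N - N mu| >= N mu / 4 by O(1/N); Markov's inequality for U_j^2 and a
   union bound do the same for V_N >= N mu / 4. Off these events N mu / 2 < S_N - V_N < 2 N mu. *)

lemma sort_nth_le_iff:
  fixes xs :: "'a::linorder list"
  assumes k: "k < length xs"
  shows "sort xs ! k \<le> a \<longleftrightarrow> k < length (filter (\<lambda>y. y \<le> a) xs)"
proof -
  define ys where "ys = sort xs"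
  have sorted: "sorted ys" and len: "length ys = length xs"
    by (simp_all add: ys_def)
  have "length (filter (\<lambda>y. y \<le> a) xs) = length (filter (\<lambda>y. y \<le> a) ys)"
    unfolding ys_def by (metis mset_filter mset_sort size_mset)
  also have "\<dots> = card {i. i < length ys \<and> ys ! i \<le> a}"
    by (rule length_filter_conv_card)
  finally have count: "length (filter (\<lambda>y. y \<le> a) xs) = card {i. i < length ys \<and> ys ! i \<le> a}" .
  show ?thesis
  proof
    assume "sort xs ! k \<le> a"
    then have "{0..k} \<subseteq> {i. i < length ys \<and> ys ! i \<le> a}"
      using sorted k len by (auto simp: ys_def intro: order.trans[OF sorted_nth_mono])
    from card_mono[OF _ this] show "k < length (filter (\<lambda>y. y \<le> a) xs)"
      using count by simp
  next
    assume few: "k < length (filter (\<lambda>y. y \<le> a) xs)"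
    show "sort xs ! k \<le> a"
    proof (rule ccontr)
      assume "\<not> sort xs ! k \<le> a"
      then have "i < k" if "i < length ys" "ys ! i \<le> a" for i
        using sorted_nth_mono[OF sorted, of k i] that by (force simp: ys_def)
      then have "{i. i < length ys \<and> ys ! i \<le> a} \<subseteq> {0..<k}" by auto
      from card_mono[OF _ this] show False using few count by simp
    qed
  qed
qed

lemma measurable_length_filter_le [measurable]:
  assumes [measurable]: "\<And>j. U j \<in> borel_measurable M"
  shows "(\<lambda>w. length (filter (\<lambda>j. U j w \<le> (a::real)) js)) \<in> measurable M (count_space UNIV)"
proof (induction js)
  case (Cons j js)
  have "(\<lambda>w. length (filter (\<lambda>j. U j w \<le> a) (j # js))) =
    (\<lambda>w. if U j w \<le> a then Suc (length (filter (\<lambda>j. U j w \<le> a) js))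
         else length (filter (\<lambda>j. U j w \<le> a) js))"
    by auto
  then show ?case using Cons by simp
qed simp

lemma borel_measurable_order_stat [measurable]:
  assumes [measurable]: "\<And>j. U j \<in> borel_measurable M"
  shows "(\<lambda>w. order_stat U N w i) \<in> borel_measurable M"
proof (cases "i - 1 < N")
  case True
  show ?thesis
  proof (subst borel_measurable_iff_le, intro allI)
    fix a
    have "{w \<in> space M. order_stat U N w i \<le> a} =
        {w \<in> space M. i - 1 < length (filter (\<lambda>j. U j w \<le> a) [0..<N])}"
      using True by (auto simp: order_stat_def sort_nth_le_iff filter_map o_def)
    then show "{w \<in> space M. order_stat U N w i \<le> a} \<in> sets M" by simp
  qed
next
  case False
  then have "N + (i - 1 - N) = i - 1" by simp
  \<comment> \<open>out of range, the order statistic is the junk value \<open>[] ! (i - 1 - N)\<close>, a constant\<close>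
  then have "order_stat U N w i = [] ! (i - 1 - N)" for w
    using nth_append_length_plus[of "sort (map (\<lambda>j. U j w) [0..<N])" "[]" "i - 1 - N"]
    by (simp add: order_stat_def)
  then show ?thesis by simp
qed

lemma borel_measurable_E_N [measurable]:
  assumes [measurable]: "\<And>j. U j \<in> borel_measurable M"
  shows "E_N U N \<in> borel_measurable M"
  unfolding E_N_def by measurable

lemma order_stat_mono:
  assumes "1 \<le> i" "i \<le> k" "k \<le> N"
  shows "order_stat U N w i \<le> order_stat U N w k"
  unfolding order_stat_def using assms by (intro sorted_nth_mono) auto

lemma order_stat_in_sample:
  assumes "1 \<le> i" "i \<le> N"
  obtains j where "j < N" "order_stat U N w i = U j w"
proof -
  have "order_stat U N w i \<in> set (sort (map (\<lambda>j. U j w) [0..<N]))"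
    unfolding order_stat_def using assms by (intro nth_mem) auto
  then show ?thesis using that by auto
qed

lemma sum_order_stat: "(\<Sum>i=1..N. order_stat U N w i) = (\<Sum>j<N. U j w)"
proof -
  have "(\<Sum>i=1..N. order_stat U N w i) = (\<Sum>i<N. sort (map (\<lambda>j. U j w) [0..<N]) ! i)"
    by (rule sum.reindex_bij_witness[of _ Suc "\<lambda>i. i - 1"]) (auto simp: order_stat_def)
  also have "\<dots> = sum_list (sort (map (\<lambda>j. U j w) [0..<N]))"
    by (simp add: sum_list_sum_nth atLeast0LessThan)
  also have "\<dots> = sum_list (map (\<lambda>j. U j w) [0..<N])"
    by (metis mset_sort sum_mset_sum_list)
  also have "\<dots> = (\<Sum>j<N. U j w)"
    by (simp add: sum_list_distinct_conv_sum_set atLeast0LessThan)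
  finally show ?thesis .
qed

lemma harmonic_term_bounds:
  fixes a b :: real
  assumes "0 < a" "a \<le> b"
  shows "a / 2 \<le> a * b / (b + a)" "a * b / (b + a) \<le> a"
  using assms by (auto simp: field_simps)

lemma E_N_bounds:
  assumes N: "2 \<le> N" and pos: "\<And>j. j < N \<Longrightarrow> 0 < U j w"
  shows "((\<Sum>j<N. U j w) - order_stat U N w N) / (2 * real N) \<le> E_N U N w"
    and "E_N U N w \<le> ((\<Sum>j<N. U j w) - order_stat U N w N) / N"
proof -
  let ?V = "order_stat U N w"
  define t where "t i = ?V i * ?V (N - 1) / (?V (N - 1) + ?V i)" for i
  have t: "?V i / 2 \<le> t i \<and> t i \<le> ?V i" if i: "i \<in> {1..N-1}" for i
  proof -
    from i have "1 \<le> i" "i \<le> N" by auto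
    then obtain j where "j < N" "?V i = U j w" by (rule order_stat_in_sample)
    then have "0 < ?V i" using pos by simp
    moreover have "?V i \<le> ?V (N - 1)" using i by (intro order_stat_mono) auto
    ultimately show ?thesis unfolding t_def using harmonic_term_bounds by auto
  qed
  have "{1..N} = insert N {1..N-1}" using N by auto
  then have "(\<Sum>i=1..N. ?V i) = ?V N + (\<Sum>i=1..N-1. ?V i)" using N by simp
  then have rest: "(\<Sum>i=1..N-1. ?V i) = (\<Sum>j<N. U j w) - ?V N"
    using sum_order_stat[of U N w] by simp
  have E_N: "E_N U N w = (\<Sum>i=1..N-1. t i) / N"
    by (simp add: E_N_def t_def)
  have "(\<Sum>i=1..N-1. ?V i / 2) \<le> (\<Sum>i=1..N-1. t i)"
    using t by (intro sum_mono) auto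
  then have "(\<Sum>i=1..N-1. ?V i) / 2 \<le> (\<Sum>i=1..N-1. t i)"
    by (simp add: sum_divide_distrib)
  then show "((\<Sum>j<N. U j w) - ?V N) / (2 * real N) \<le> E_N U N w"
    unfolding E_N rest[symmetric] using N by (simp add: divide_right_mono flip: divide_divide_eq_left)
  have "(\<Sum>i=1..N-1. t i) \<le> (\<Sum>i=1..N-1. ?V i)"
    using t by (intro sum_mono) auto
  then show "E_N U N w \<le> ((\<Sum>j<N. U j w) - ?V N) / N"
    unfolding E_N rest[symmetric] by (simp add: divide_right_mono)
qed

lemma E_N_within_bounds:
  fixes \<mu> :: real
  assumes N: "2 \<le> N" and "0 < \<mu>" and pos: "\<And>j. j < N \<Longrightarrow> 0 < U j w"
    and sum: "\<bar>(\<Sum>j<N. U j w) - N * \<mu>\<bar> < N * \<mu> / 4"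
    and small: "\<And>j. j < N \<Longrightarrow> U j w < N * \<mu> / 4"
  shows "\<mu> / 4 \<le> E_N U N w \<and> E_N U N w \<le> 2 * \<mu>"
proof -
  let ?R = "(\<Sum>j<N. U j w) - order_stat U N w N"
  obtain j where "j < N" "order_stat U N w N = U j w"
    using order_stat_in_sample[of N N U w] N by auto
  then have "0 < order_stat U N w N" "order_stat U N w N < N * \<mu> / 4"
    using pos small by auto
  moreover have "0 < N * \<mu>" using N \<open>0 < \<mu>\<close> by simp
  ultimately have lower: "N * \<mu> / 2 \<le> ?R" and upper: "?R \<le> N * (2 * \<mu>)"
    using sum unfolding abs_less_iff by linarith+
  have "\<mu> / 4 = (N * \<mu> / 2) / (2 * real N)" using N by simp
  also have "\<dots> \<le> ?R / (2 * real N)" using lower by (intro divide_right_mono) simp_all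
  also have "\<dots> \<le> E_N U N w" by (rule E_N_bounds(1)[of N U w, OF N pos])
  finally have "\<mu> / 4 \<le> E_N U N w" .
  have "E_N U N w \<le> ?R / N" by (rule E_N_bounds(2)[of N U w, OF N pos])
  also have "\<dots> \<le> N * (2 * \<mu>) / N" using upper by (intro divide_right_mono) simp_all
  also have "\<dots> = 2 * \<mu>" using N by simp
  finally show ?thesis using \<open>\<mu> / 4 \<le> E_N U N w\<close> by simp
qed

lemma
  fixes g :: "real \<Rightarrow> real"
  assumes [measurable]: "X \<in> borel_measurable M" "Y \<in> borel_measurable M" "g \<in> borel_measurable borel"
    and same_distr: "distr M borel X = distr M borel Y"
  shows integrable_comp_eq_of_distr_eq: "integrable M (\<lambda>w. g (X w)) \<longleftrightarrow> integrable M (\<lambda>w. g (Y w))"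
    and integral_comp_eq_of_distr_eq: "(\<integral>w. g (X w) \<partial>M) = (\<integral>w. g (Y w) \<partial>M)"
  using integrable_distr_eq[of X M borel g] integrable_distr_eq[of Y M borel g]
    integral_distr[of X M borel g] integral_distr[of Y M borel g]
  by (simp_all add: same_distr)

context prob_space
begin

lemma indep_vars_expectation_mult:
  fixes X :: "'i \<Rightarrow> 'a \<Rightarrow> real"
  assumes indep: "indep_vars (\<lambda>_. borel) X I" and "i \<in> I" "j \<in> I" "i \<noteq> j"
    and "integrable M (X i)" "integrable M (X j)"
  shows "integrable M (\<lambda>w. X i w * X j w)"
    and "expectation (\<lambda>w. X i w * X j w) = expectation (X i) * expectation (X j)"
proof -
  have pair: "indep_vars (\<lambda>_. borel) X {i, j}"
    using indep_vars_subset[OF indep] assms by auto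
  have prod: "(\<Prod>k\<in>{i, j}. X k w) = X i w * X j w" for w
    using \<open>i \<noteq> j\<close> by simp
  have "integrable M (\<lambda>w. \<Prod>k\<in>{i, j}. X k w)"
    by (rule indep_vars_integrable[OF _ pair]) (use assms in auto)
  then show "integrable M (\<lambda>w. X i w * X j w)"
    unfolding prod .
  have "expectation (\<lambda>w. \<Prod>k\<in>{i, j}. X k w) = (\<Prod>k\<in>{i, j}. expectation (X k))"
    by (rule indep_vars_lebesgue_integral[OF _ pair]) (use assms in auto)
  then show "expectation (\<lambda>w. X i w * X j w) = expectation (X i) * expectation (X j)"
    unfolding prod using \<open>i \<noteq> j\<close> by simp
qed

lemma expectation_square_sum_indep_centered:
  fixes X :: "'i \<Rightarrow> 'a \<Rightarrow> real"
  assumes "finite J" and indep: "indep_vars (\<lambda>_. borel) X J"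
    and sq: "\<And>j. j \<in> J \<Longrightarrow> integrable M (\<lambda>w. (X j w)\<^sup>2)"
    and centered: "\<And>j. j \<in> J \<Longrightarrow> expectation (X j) = 0"
  shows "integrable M (\<lambda>w. (\<Sum>j\<in>J. X j w)\<^sup>2)"
    and "expectation (\<lambda>w. (\<Sum>j\<in>J. X j w)\<^sup>2) = (\<Sum>j\<in>J. expectation (\<lambda>w. (X j w)\<^sup>2))"
proof -
  have meas: "X j \<in> borel_measurable M" if "j \<in> J" for j
    using indep that by (auto simp: indep_vars_def)
  have int: "integrable M (X j)" if "j \<in> J" for j
    by (rule square_integrable_imp_integrable[OF meas sq]) (use that in simp_all)
  have cross: "integrable M (\<lambda>w. X j w * X k w) \<and>
      expectation (\<lambda>w. X j w * X k w) = (if j = k then expectation (\<lambda>w. (X j w)\<^sup>2) else 0)"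
    if "j \<in> J" "k \<in> J" for j k
    using that sq[of j] indep_vars_expectation_mult[OF indep, of j k] int centered
    by (cases "j = k") (auto simp: power2_eq_square)
  have expand: "(\<Sum>j\<in>J. X j w)\<^sup>2 = (\<Sum>j\<in>J. \<Sum>k\<in>J. X j w * X k w)" for w
    by (simp add: power2_eq_square sum_product)
  show "integrable M (\<lambda>w. (\<Sum>j\<in>J. X j w)\<^sup>2)"
    unfolding expand using cross by auto
  have "expectation (\<lambda>w. (\<Sum>j\<in>J. X j w)\<^sup>2) = (\<Sum>j\<in>J. \<Sum>k\<in>J. expectation (\<lambda>w. X j w * X k w))"
    unfolding expand using cross by (simp add: Bochner_Integration.integral_sum)
  also have "\<dots> = (\<Sum>j\<in>J. \<Sum>k\<in>J. if j = k then expectation (\<lambda>w. (X j w)\<^sup>2) else 0)"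
    using cross by (auto intro!: sum.cong)
  also have "\<dots> = (\<Sum>j\<in>J. expectation (\<lambda>w. (X j w)\<^sup>2))"
    using \<open>finite J\<close> by simp
  finally show "expectation (\<lambda>w. (\<Sum>j\<in>J. X j w)\<^sup>2) = (\<Sum>j\<in>J. expectation (\<lambda>w. (X j w)\<^sup>2))" .
qed

lemma variance_sum_indep:
  fixes X :: "'i \<Rightarrow> 'a \<Rightarrow> real"
  assumes "finite J" and indep: "indep_vars (\<lambda>_. borel) X J"
    and sq: "\<And>j. j \<in> J \<Longrightarrow> integrable M (\<lambda>w. (X j w)\<^sup>2)"
  shows "integrable M (\<lambda>w. (\<Sum>j\<in>J. X j w)\<^sup>2)"
    and "variance (\<lambda>w. \<Sum>j\<in>J. X j w) = (\<Sum>j\<in>J. variance (X j))"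
proof -
  have meas: "X j \<in> borel_measurable M" if "j \<in> J" for j
    using indep that by (auto simp: indep_vars_def)
  have int: "integrable M (X j)" if "j \<in> J" for j
    by (rule square_integrable_imp_integrable[OF meas sq]) (use that in simp_all)
  define Y where "Y = (\<lambda>j w. X j w - expectation (X j))"
  have indep_Y: "indep_vars (\<lambda>_. borel) Y J"
    unfolding Y_def by (rule indep_vars_compose2[OF indep]) simp
  have sq_Y: "integrable M (\<lambda>w. (Y j w)\<^sup>2)" if "j \<in> J" for j
    using that sq int unfolding Y_def power2_diff by auto
  have centered_Y: "expectation (Y j) = 0" if "j \<in> J" for j
    using int[OF that] by (simp add: Y_def prob_space)
  note sum_Y = expectation_square_sum_indep_centered[OF \<open>finite J\<close> indep_Y sq_Y centered_Y]
  have mean: "expectation (\<lambda>w. \<Sum>j\<in>J. X j w) = (\<Sum>j\<in>J. expectation (X j))"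
    using int by (simp add: Bochner_Integration.integral_sum)
  have centered_sum: "(\<Sum>j\<in>J. X j w) = (\<Sum>j\<in>J. Y j w) + (\<Sum>j\<in>J. expectation (X j))" for w
    by (simp add: Y_def sum_subtractf)
  have "integrable M (\<lambda>w. \<Sum>j\<in>J. Y j w)"
    using int by (auto simp: Y_def)
  then show "integrable M (\<lambda>w. (\<Sum>j\<in>J. X j w)\<^sup>2)"
    unfolding centered_sum power2_sum using sum_Y(1) by auto
  have deviation: "(\<Sum>j\<in>J. X j w) - expectation (\<lambda>w. \<Sum>j\<in>J. X j w) = (\<Sum>j\<in>J. Y j w)" for w
    unfolding mean by (simp add: Y_def sum_subtractf)
  show "variance (\<lambda>w. \<Sum>j\<in>J. X j w) = (\<Sum>j\<in>J. variance (X j))"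
    unfolding deviation using sum_Y(2) by (simp add: Y_def)
qed


lemma expectation_pos_AE:
  fixes X :: "'a \<Rightarrow> real"
  assumes "integrable M X" and pos: "AE w in M. 0 < X w"
  shows "0 < expectation X"
proof -
  have nonneg: "AE w in M. 0 \<le> X w"
    using pos by eventually_elim simp
  have "expectation X \<noteq> 0"
  proof
    assume "expectation X = 0"
    then have "AE w in M. X w = 0"
      using integral_nonneg_eq_0_iff_AE[OF \<open>integrable M X\<close> nonneg] by simp
    with pos have "AE w in M. False" by eventually_elim simp
    then show False by simp
  qed
  moreover have "0 \<le> expectation X"
    using nonneg by (rule integral_nonneg_AE)
  ultimately show ?thesis by simp
qed

lemma prob_sample_sum_deviation_le:
  fixes U :: "nat \<Rightarrow> 'a \<Rightarrow> real" and \<mu> m2 t :: real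
  assumes indep: "indep_vars (\<lambda>_. borel) U UNIV"
    and sq: "\<And>j. integrable M (\<lambda>w. (U j w)\<^sup>2)"
    and mean: "\<And>j. expectation (U j) = \<mu>"
    and second: "\<And>j. expectation (\<lambda>w. (U j w)\<^sup>2) = m2"
    and "0 < t"
  shows "prob {w \<in> space M. t \<le> \<bar>(\<Sum>j<N. U j w) - N * \<mu>\<bar>} \<le> N * m2 / t\<^sup>2"
proof -
  have meas [measurable]: "U j \<in> borel_measurable M" for j
    using indep by (auto simp: indep_vars_def)
  have int: "integrable M (U j)" for j
    by (rule square_integrable_imp_integrable[OF meas sq])
  define S where "S = (\<lambda>w. \<Sum>j<N. U j w)"
  have ES: "expectation S = N * \<mu>"
    using int mean by (simp add: S_def Bochner_Integration.integral_sum)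
  have indep_N: "indep_vars (\<lambda>_. borel) U {..<N}"
    using indep_vars_subset[OF indep] by simp
  note var_S = variance_sum_indep[OF finite_lessThan indep_N sq]
  have "prob {w \<in> space M. t \<le> \<bar>S w - expectation S\<bar>} \<le> variance S / t\<^sup>2"
    using var_S(1) \<open>0 < t\<close> by (intro Chebyshev_inequality) (simp_all add: S_def)
  also have "variance S = (\<Sum>j<N. variance (U j))"
    using var_S(2) by (simp add: S_def)
  also have "\<dots> \<le> N * m2"
  proof -
    have "variance (U j) \<le> m2" for j
      using variance_eq[OF int sq, of j] by (simp add: mean second)
    then show ?thesis using sum_mono[of "{..<N}" "\<lambda>j. variance (U j)" "\<lambda>_. m2"] by simp
  qed
  finally show ?thesis
    unfolding ES by (simp add: S_def divide_right_mono)
qed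

lemma prob_E_N_within_bounds_ge:
  fixes U :: "nat \<Rightarrow> 'a \<Rightarrow> real" and \<mu> m2 :: real
  assumes indep: "indep_vars (\<lambda>_. borel) U UNIV"
    and pos: "\<And>j. AE w in M. 0 < U j w"
    and sq: "\<And>j. integrable M (\<lambda>w. (U j w)\<^sup>2)"
    and mean: "\<And>j. expectation (U j) = \<mu>"
    and second: "\<And>j. expectation (\<lambda>w. (U j w)\<^sup>2) = m2"
    and "0 < \<mu>" and N: "2 \<le> N"
  shows "1 - 32 * m2 / (\<mu>\<^sup>2 * N) \<le> prob {w \<in> space M. \<mu> / 4 \<le> E_N U N w \<and> E_N U N w \<le> 2 * \<mu>}"
proof -
  have [measurable]: "U j \<in> borel_measurable M" for j
    using indep by (auto simp: indep_vars_def)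
  define t where "t = N * \<mu> / 4"
  have "0 < t" using N \<open>0 < \<mu>\<close> by (simp add: t_def)
  define A where "A = {w \<in> space M. \<mu> / 4 \<le> E_N U N w \<and> E_N U N w \<le> 2 * \<mu>}"
  define Dev where "Dev = {w \<in> space M. t \<le> \<bar>(\<Sum>j<N. U j w) - N * \<mu>\<bar>}"
  define Big where "Big j = {w \<in> space M. t\<^sup>2 \<le> (U j w)\<^sup>2}" for j
  have [measurable]: "A \<in> sets M" "Dev \<in> sets M" "Big j \<in> sets M" for j
    unfolding A_def Dev_def Big_def by measurable
  have prob_Dev: "prob Dev \<le> N * m2 / t\<^sup>2"
    unfolding Dev_def using indep sq mean second \<open>0 < t\<close> by (rule prob_sample_sum_deviation_le)
  have prob_Big: "prob (Big j) \<le> m2 / t\<^sup>2" for j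
    using integral_Markov_inequality_measure[where A="space M" and c="t\<^sup>2", OF sq[of j]] \<open>0 < t\<close>
    by (simp add: Big_def second)
  have "AE w in M. \<forall>j\<in>{..<N}. 0 < U j w"
    by (intro AE_finite_allI) (simp_all add: pos)
  then have "AE w in M. w \<in> space M - A \<longrightarrow> w \<in> Dev \<union> (\<Union>j<N. Big j)"
  proof eventually_elim
    case (elim w)
    show ?case
    proof (rule impI, rule ccontr)
      assume w: "w \<in> space M - A" and typical: "w \<notin> Dev \<union> (\<Union>j<N. Big j)"
      have "w \<notin> Dev" using typical by blast
      then have "\<bar>(\<Sum>j<N. U j w) - N * \<mu>\<bar> < N * \<mu> / 4"
        using w by (simp add: Dev_def t_def not_le)
      moreover have "U j w < N * \<mu> / 4" if "j < N" for j
      proof -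
        from w typical that have "\<not> t\<^sup>2 \<le> (U j w)\<^sup>2"
          unfolding Big_def by auto
        then have "\<bar>U j w\<bar> < t"
          using \<open>0 < t\<close> abs_le_square_iff[of t "U j w"] by auto
        then show ?thesis by (simp add: t_def)
      qed
      ultimately have "\<mu> / 4 \<le> E_N U N w \<and> E_N U N w \<le> 2 * \<mu>"
        using elim by (intro E_N_within_bounds[OF N \<open>0 < \<mu>\<close>]) simp_all
      with w show False by (simp add: A_def)
    qed
  qed
  then have "prob (space M - A) \<le> prob (Dev \<union> (\<Union>j<N. Big j))"
    by (rule finite_measure_mono_AE) simp
  also have "\<dots> \<le> prob Dev + prob (\<Union>j<N. Big j)"
    by (rule measure_Un_le) simp_all
  also have "\<dots> \<le> N * m2 / t\<^sup>2 + (\<Sum>j<N. m2 / t\<^sup>2)"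
  proof (rule add_mono[OF prob_Dev])
    have "prob (\<Union>j<N. Big j) \<le> (\<Sum>j<N. prob (Big j))"
      by (rule finite_measure_subadditive_finite) auto
    also have "\<dots> \<le> (\<Sum>j<N. m2 / t\<^sup>2)"
      using prob_Big by (rule sum_mono)
    finally show "prob (\<Union>j<N. Big j) \<le> (\<Sum>j<N. m2 / t\<^sup>2)" .
  qed
  also have "\<dots> = 32 * m2 / (\<mu>\<^sup>2 * N)"
    using N \<open>0 < \<mu>\<close> by (simp add: t_def field_simps power2_eq_square)
  finally show ?thesis
    using prob_compl[of A] by (simp add: A_def)
qed

end

theorem lemma4:
  fixes M :: "'a measure" and U :: "nat \<Rightarrow> 'a \<Rightarrow> real"
    and \<beta> x0 :: real
  assumes P: "prob_space M"
    and meas: "\<And>i. U i \<in> borel_measurable M"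
    and indep: "prob_space.indep_vars M (\<lambda>_. borel) U UNIV"
    and ident: "\<And>i. distr M borel (U i) = distr M borel (U 0)"
    and pos: "\<And>i. AE \<omega> in M. U i \<omega> > 0"
    and sq: "integrable M (\<lambda>\<omega>. (U 0 \<omega>)\<^sup>2)"
    and beta: "0 < \<beta>" "\<beta> < 1/2"
    and x0: "x0 > 0" "x0 \<in> interior (measure_support (distr M borel (U 0)))"
    and cvx: "convex_on {x0..}
               (\<lambda>x. (measure M {\<omega> \<in> space M. U 0 \<omega> > x}) powr (1/2 - \<beta>))"
  shows "(\<lambda>N. measure M {\<omega> \<in> space M.
              (1/4) * (\<integral>\<omega>'. U 0 \<omega>' \<partial>M) \<le> E_N U N \<omega> \<and>
              E_N U N \<omega> \<le> 2 * (\<integral>\<omega>'. U 0 \<omega>' \<partial>M)}) \<longlonglongrightarrow> 1"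
proof -
  interpret prob_space M by (rule P)
  define \<mu> where "\<mu> = expectation (U 0)"
  define m2 where "m2 = expectation (\<lambda>w. (U 0 w)\<^sup>2)"
  have "integrable M (\<lambda>w. (U j w)\<^sup>2) \<longleftrightarrow> integrable M (\<lambda>w. (U 0 w)\<^sup>2)" for j
    by (rule integrable_comp_eq_of_distr_eq[OF meas meas _ ident]) measurable
  with sq have sq_all: "integrable M (\<lambda>w. (U j w)\<^sup>2)" for j by simp
  have mean: "expectation (U j) = \<mu>" for j
    unfolding \<mu>_def by (rule integral_comp_eq_of_distr_eq[OF meas meas _ ident]) measurable
  have second: "expectation (\<lambda>w. (U j w)\<^sup>2) = m2" for j
    unfolding m2_def by (rule integral_comp_eq_of_distr_eq[OF meas meas _ ident]) measurable
  have "0 < \<mu>"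
    unfolding \<mu>_def using square_integrable_imp_integrable[OF meas sq] pos
    by (rule expectation_pos_AE)
  define A where "A N = {\<omega> \<in> space M.
      (1/4) * (\<integral>\<omega>'. U 0 \<omega>' \<partial>M) \<le> E_N U N \<omega> \<and> E_N U N \<omega> \<le> 2 * (\<integral>\<omega>'. U 0 \<omega>' \<partial>M)}" for N
  have A_eq: "A N = {w \<in> space M. \<mu> / 4 \<le> E_N U N w \<and> E_N U N w \<le> 2 * \<mu>}" for N
    unfolding A_def \<mu>_def by simp
  have "\<forall>\<^sub>F N in sequentially. 1 - 32 * m2 / (\<mu>\<^sup>2 * N) \<le> prob (A N)"
    unfolding A_eq
    by (rule eventually_sequentiallyI[of 2])
      (rule prob_E_N_within_bounds_ge[OF indep pos sq_all mean second \<open>0 < \<mu>\<close>])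
  moreover have "\<forall>\<^sub>F N in sequentially. prob (A N) \<le> 1"
    by (simp add: prob_le_1)
  moreover have "(\<lambda>N. 1 - 32 * m2 / \<mu>\<^sup>2 / real N) \<longlonglongrightarrow> 1 - 0"
    by (intro tendsto_diff tendsto_const lim_const_over_n)
  then have "(\<lambda>N. 1 - 32 * m2 / (\<mu>\<^sup>2 * N)) \<longlonglongrightarrow> 1"
    by (simp add: divide_divide_eq_left)
  ultimately have "(\<lambda>N. prob (A N)) \<longlonglongrightarrow> 1"
    by (rule tendsto_sandwich[OF _ _ _ tendsto_const])
  then show ?thesis
    unfolding A_def .
qed

end
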